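(* Let $V\subset Z^n$ be finite, let $C$ be the cluster of unit cubes in $\mathbb{R}^n$ centered at the points of $V$, and let $\mathcal{M}$ be the lattice generated by $\tfrac12 e_1,e_2,\dots,e_n$. If there is an Abelian group $G$ of order $2|V|$ and a homomorphism $\phi:\mathcal{M}\to G$ such that the restriction of $\phi$ to $W=V\cup(V+\tfrac12 e_1)$ is a bijection onto $G$ and $\phi(e_i)$ is a generator of $G$ for some $i\ge 2$, then there is a non-regular lattice tiling of $\mathbb{R}^n$ by $C$.
   Context: A unit cube centered at $c\in\mathbb{R}^n$ is $c+[-\tfrac12,\tfrac12]^n$. A lattice tiling of $\mathbb{R}^n$ by $C$ is a family $\{C+l;\ l\in\mathcal{L}\}$ with $\mathcal{L}$ a lattice, whose members have pairwise disjoint interiors and cover $\mathbb{R}^n$. Two unit cubes with centers $c,c'$ are neighbors if there is an index $i$ with $|c_i-c_i'|=1$ and $c_j=c_j'$ for all $j\ne i$. A tiling by clusters of cubes is non-regular if it contains two cubes from different tiles whose intersection is $(n-1)$-dimensional but which are not neighbors. *)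

theory Defs
  imports "HOL-Analysis.Analysis" "HOL-Algebra.Generated_Groups"
begin

definition unit_cube :: "real^'n \<Rightarrow> (real^'n) set" where
  "unit_cube c = {x. \<forall>j. \<bar>x$j - c$j\<bar> \<le> 1/2}"

definition cluster :: "(real^'n) set \<Rightarrow> (real^'n) set" where
  "cluster V = (\<Union>v\<in>V. unit_cube v)"

definition integer_point :: "real^'n \<Rightarrow> bool" where
  "integer_point v \<longleftrightarrow> (\<forall>j. v$j \<in> \<int>)"

definition is_lattice :: "(real^'n) set \<Rightarrow> bool" where
  "is_lattice L \<longleftrightarrow> (\<exists>B::real^'n^'n. invertible B \<and>
      L = range (\<lambda>z::int^'n. B *v (\<chi> j. of_int (z$j))))"

definition lattice_tiling :: "(real^'n) set \<Rightarrow> (real^'n) set \<Rightarrow> bool" where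
  "lattice_tiling C L \<longleftrightarrow> is_lattice L \<and>
     (\<forall>l\<in>L. \<forall>l'\<in>L. l \<noteq> l' \<longrightarrow>
         interior ((\<lambda>x. x + l) ` C) \<inter> interior ((\<lambda>x. x + l') ` C) = {}) \<and>
     (\<Union>l\<in>L. (\<lambda>x. x + l) ` C) = UNIV"

definition cube_neighbors :: "real^'n \<Rightarrow> real^'n \<Rightarrow> bool" where
  "cube_neighbors c c' \<longleftrightarrow>
     (\<exists>i. \<bar>c$i - c'$i\<bar> = 1 \<and> (\<forall>j. j \<noteq> i \<longrightarrow> c$j = c'$j))"

definition non_regular_tiling :: "(real^'n) set \<Rightarrow> (real^'n) set \<Rightarrow> bool" where
  "non_regular_tiling V L \<longleftrightarrow>
     (\<exists>l\<in>L. \<exists>l'\<in>L. \<exists>v\<in>V. \<exists>v'\<in>V. l \<noteq> l' \<and>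
        aff_dim (unit_cube (v + l) \<inter> unit_cube (v' + l')) = int CARD('n) - 1 \<and>
        \<not> cube_neighbors (v + l) (v' + l'))"

text \<open>The lattice M generated by (1/2) e_k and e_j (j \<noteq> k), where k plays
  the role of the first coordinate, viewed as an additive group.\<close>
definition half_lattice :: "'n \<Rightarrow> (real^'n) set" where
  "half_lattice k = {x. 2 * x$k \<in> \<int> \<and> (\<forall>j. j \<noteq> k \<longrightarrow> x$j \<in> \<int>)}"

definition half_lattice_group :: "'n \<Rightarrow> (real^'n) monoid" where
  "half_lattice_group k = \<lparr>carrier = half_lattice k, monoid.mult = (+), one = 0\<rparr>"

end

theory Submission
  imports Defs "HOL-Algebra.Multiplicative_Group"
begin

text \<open>Let K be the kernel of \<open>\<phi>\<close> on M. Since \<open>\<phi>\<close> maps W bijectively onto G, every point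
  of M is congruent modulo K to exactly one point of W. Cutting each unit cube along the
  coordinate \<open>k\<close> into two half boxes, the cluster becomes the union of the half boxes attached
  to the points of W; since the half boxes attached to the points of M tile space, the
  translates of the cluster by K tile space. K is a lattice because the generator \<open>\<phi>(e\<^sub>i)\<close>
  yields an explicit basis of it. For non-regularity, \<open>\<phi>(V)\<close> is a proper subset of the cyclic
  group G, so it is not closed under multiplication by \<open>\<phi>(e\<^sub>i)\<close>: some \<open>v + e\<^sub>i\<close> is congruent
  modulo K to a point \<open>v' + e\<^sub>k/2\<close> of W. The cube at \<open>v\<close> and the translated cube at
  \<open>v + e\<^sub>i - e\<^sub>k/2\<close> then share a facet but are not neighbours.\<close>

subsection \<open>The lattice M\<close>

lemma half_plus_Ints_not_Ints: "(x::real) \<in> \<int> \<Longrightarrow> x + 1/2 \<notin> \<int>"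
proof
  assume "x \<in> \<int>" "x + 1/2 \<in> \<int>"
  then have "(x + 1/2) - x \<in> \<int>" by (rule Ints_diff[rotated])
  then obtain n :: int where "of_int n = (1/2::real)" by (auto elim: Ints_cases)
  then have "2 * of_int n = (1::real)" by simp
  then have "2 * n = 1" by (metis of_int_eq_1_iff of_int_mult of_int_numeral)
  then show False by presburger
qed

lemma half_lattice_add: "x \<in> half_lattice k \<Longrightarrow> y \<in> half_lattice k \<Longrightarrow> x + y \<in> half_lattice k"
  by (auto simp: half_lattice_def distrib_left)

lemma half_lattice_uminus: "x \<in> half_lattice k \<Longrightarrow> - x \<in> half_lattice k"
  by (auto simp: half_lattice_def)

lemma half_lattice_diff: "x \<in> half_lattice k \<Longrightarrow> y \<in> half_lattice k \<Longrightarrow> x - y \<in> half_lattice k"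
  by (auto simp: half_lattice_def right_diff_distrib)

lemma half_lattice_nth_Ints: "x \<in> half_lattice k \<Longrightarrow> j \<noteq> k \<Longrightarrow> x $ j \<in> \<int>"
  by (simp add: half_lattice_def)

lemma zero_in_half_lattice: "0 \<in> half_lattice k"
  by (auto simp: half_lattice_def)

lemma integer_point_in_half_lattice: "integer_point x \<Longrightarrow> x \<in> half_lattice k"
  by (auto simp: half_lattice_def integer_point_def)

lemma axis_in_half_lattice: "axis j 1 \<in> half_lattice k"
  by (auto simp: half_lattice_def axis_def)

lemma half_axis_in_half_lattice: "(1/2) *\<^sub>R axis k 1 \<in> half_lattice k"
  by (auto simp: half_lattice_def axis_def)

lemma half_lattice_scaleR_int:
  assumes "x \<in> half_lattice k"
  shows "of_int m *\<^sub>R x \<in> half_lattice k"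
proof -
  have "2 * (of_int m * x $ k) = of_int m * (2 * x $ k)" by simp
  moreover have "of_int m * (2 * x $ k) \<in> \<int>" using assms by (auto simp: half_lattice_def)
  ultimately have "2 * (of_int m * x $ k) \<in> \<int>" by metis
  moreover have "\<forall>j. j \<noteq> k \<longrightarrow> of_int m * x $ j \<in> \<int>" using assms by (auto simp: half_lattice_def)
  ultimately show ?thesis by (simp add: half_lattice_def del: mult.left_commute)
qed

locale half_lattice_hom = comm_group G for G :: "('g, 'b) monoid_scheme" (structure) +
  fixes \<phi> :: "real^'n \<Rightarrow> 'g" and k :: 'n
  assumes hom: "\<phi> \<in> hom (half_lattice_group k) G"
begin

lemma hom_add: "x \<in> half_lattice k \<Longrightarrow> y \<in> half_lattice k \<Longrightarrow> \<phi> (x + y) = \<phi> x \<otimes> \<phi> y"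
  using hom by (auto simp: hom_def half_lattice_group_def)

lemma hom_closed: "x \<in> half_lattice k \<Longrightarrow> \<phi> x \<in> carrier G"
  using hom by (auto simp: hom_def half_lattice_group_def)

lemma hom_zero: "\<phi> 0 = \<one>"
proof -
  have "\<phi> 0 = \<phi> 0 \<otimes> \<phi> 0" using hom_add[OF zero_in_half_lattice zero_in_half_lattice] by simp
  then show ?thesis using hom_closed[OF zero_in_half_lattice] by (metis l_cancel_one r_one)
qed

lemma hom_uminus:
  assumes "x \<in> half_lattice k"
  shows "\<phi> (- x) = inv (\<phi> x)"
proof -
  have "\<phi> x \<otimes> \<phi> (- x) = \<one>"
    using hom_add[OF assms half_lattice_uminus[OF assms]] hom_zero by simp
  then show ?thesis using assms hom_closed half_lattice_uminus by (metis inv_equality m_comm)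
qed

lemma hom_diff: "x \<in> half_lattice k \<Longrightarrow> y \<in> half_lattice k \<Longrightarrow> \<phi> (x - y) = \<phi> x \<otimes> inv (\<phi> y)"
  using hom_add[of x "- y"] hom_uminus[of y] half_lattice_uminus[of y] by simp

lemma hom_scaleR_nat:
  assumes "x \<in> half_lattice k"
  shows "\<phi> (of_nat m *\<^sub>R x) = \<phi> x [^] m"
proof (induction m)
  case 0
  then show ?case using hom_zero by simp
next
  case (Suc m)
  have "of_nat (Suc m) *\<^sub>R x = of_nat m *\<^sub>R x + x" by (simp add: algebra_simps)
  moreover have "of_nat m *\<^sub>R x \<in> half_lattice k"
    using half_lattice_scaleR_int[OF assms, of "int m"] by simp
  ultimately show ?case using Suc assms hom_add hom_closed by (simp add: nat_pow_Suc)
qed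

lemma hom_scaleR_int:
  assumes x: "x \<in> half_lattice k"
  shows "\<phi> (of_int m *\<^sub>R x) = \<phi> x [^] m"
proof (cases "m \<ge> 0")
  case True
  then show ?thesis using hom_scaleR_nat[OF x, of "nat m"]
    by (metis int_nat_eq int_pow_int of_int_of_nat_eq)
next
  case False
  have "of_int m *\<^sub>R x = - (of_nat (nat (- m)) *\<^sub>R x)" using False by simp
  moreover have "of_nat (nat (- m)) *\<^sub>R x \<in> half_lattice k"
    using half_lattice_scaleR_int[OF x, of "- m"] False by simp
  ultimately have "\<phi> (of_int m *\<^sub>R x) = inv (\<phi> x [^] nat (- m))"
    using hom_uminus hom_scaleR_nat[OF x] by simp
  also have "\<dots> = \<phi> x [^] m" using False hom_closed[OF x]
    by (metis int_pow_int int_pow_neg nat_0_le neg_0_le_iff_le nle_le minus_minus)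
  finally show ?thesis .
qed

definition kernel :: "(real^'n) set" where
  "kernel = {x \<in> half_lattice k. \<phi> x = \<one>}"

lemma zero_in_kernel: "0 \<in> kernel"
  by (simp add: kernel_def hom_zero zero_in_half_lattice)

lemma kernel_add: "x \<in> kernel \<Longrightarrow> y \<in> kernel \<Longrightarrow> x + y \<in> kernel"
  by (simp add: kernel_def hom_add half_lattice_add)

lemma hom_add_kernel: "x \<in> half_lattice k \<Longrightarrow> l \<in> kernel \<Longrightarrow> \<phi> (x + l) = \<phi> x"
  by (simp add: kernel_def hom_add hom_closed)

lemma kernel_diff: "x \<in> kernel \<Longrightarrow> y \<in> kernel \<Longrightarrow> x - y \<in> kernel"
  by (simp add: kernel_def hom_diff half_lattice_diff)

lemma kernel_scaleR_Ints: "x \<in> kernel \<Longrightarrow> a \<in> \<int> \<Longrightarrow> a *\<^sub>R x \<in> kernel"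
  by (auto simp: kernel_def hom_scaleR_int half_lattice_scaleR_int elim!: Ints_cases)

lemma kernel_sum_Ints:
  "finite S \<Longrightarrow> (\<And>j. j \<in> S \<Longrightarrow> a j \<in> kernel) \<Longrightarrow> (\<And>j. j \<in> S \<Longrightarrow> z j \<in> \<int>)
     \<Longrightarrow> (\<Sum>j\<in>S. z j *\<^sub>R a j) \<in> kernel"
  by (induction S rule: finite_induct) (auto simp: zero_in_kernel kernel_add kernel_scaleR_Ints)

end

subsection \<open>Half boxes\<close>

definition half_box :: "'n \<Rightarrow> real^'n \<Rightarrow> (real^'n) set" where
  "half_box k m =
     {y. m$k - 1/2 \<le> y$k \<and> y$k \<le> m$k \<and> (\<forall>j. j \<noteq> k \<longrightarrow> \<bar>y$j - m$j\<bar> \<le> 1/2)}"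

lemma unit_cube_eq_half_boxes:
  fixes c :: "real^'n"
  shows "unit_cube c = half_box k c \<union> half_box k (c + (1/2) *\<^sub>R axis k 1)"
proof (intro equalityI subsetI)
  fix y assume "y \<in> unit_cube c"
  then have a: "\<forall>j. \<bar>y$j - c$j\<bar> \<le> 1/2" by (simp add: unit_cube_def)
  then have "\<bar>y$k - c$k\<bar> \<le> 1/2" by blast
  then have "c$k - 1/2 \<le> y$k" "y$k \<le> c$k + 1/2" by arith+
  with a show "y \<in> half_box k c \<union> half_box k (c + (1/2) *\<^sub>R axis k 1)"
    by (cases "y$k \<le> c$k") (auto simp: half_box_def axis_def)
next
  fix y assume y: "y \<in> half_box k c \<union> half_box k (c + (1/2) *\<^sub>R axis k 1)"
  have "\<bar>y$j - c$j\<bar> \<le> 1/2" for j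
    using y by (cases "j = k") (auto simp: half_box_def axis_def)
  then show "y \<in> unit_cube c" by (simp add: unit_cube_def)
qed

lemma cluster_eq_half_boxes:
  "cluster V = (\<Union>w \<in> V \<union> (\<lambda>v. v + (1/2) *\<^sub>R axis k 1) ` V. half_box k w)"
proof -
  have "cluster V = (\<Union>v\<in>V. half_box k v \<union> half_box k (v + (1/2) *\<^sub>R axis k 1))"
    unfolding cluster_def by (rule SUP_cong[OF refl unit_cube_eq_half_boxes])
  then show ?thesis unfolding UN_Un UN_Un_distrib image_image .
qed

lemma translate_half_box: "(\<lambda>x. x + l) ` half_box k m = half_box k (m + l)"
proof (intro equalityI subsetI)
  fix y assume "y \<in> (\<lambda>x. x + l) ` half_box k m"
  then show "y \<in> half_box k (m + l)" by (auto simp: half_box_def)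
next
  fix y assume "y \<in> half_box k (m + l)"
  then have "y - l \<in> half_box k m" by (simp add: half_box_def algebra_simps)
  then show "y \<in> (\<lambda>x. x + l) ` half_box k m" by (rule image_eqI[rotated]) simp
qed

lemma half_boxes_cover:
  fixes y :: "real^'n"
  shows "\<exists>m \<in> half_lattice k. y \<in> half_box k m"
proof -
  define m :: "real^'n" where
    "m = (\<chi> j. if j = k then of_int \<lceil>2 * y$k\<rceil> / 2 else of_int \<lfloor>y$j + 1/2\<rfloor>)"
  have "m \<in> half_lattice k" by (simp add: m_def half_lattice_def)
  moreover have "m$k - 1/2 \<le> y$k" "y$k \<le> m$k"
    by (simp_all add: m_def) linarith+
  moreover have "\<bar>y$j - m$j\<bar> \<le> 1/2" if "j \<noteq> k" for j
    using that unfolding abs_le_iff by (simp add: m_def) linarith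
  ultimately show ?thesis unfolding half_box_def by blast
qed

lemma half_box_unique:
  assumes y: "\<forall>j. 2 * y$j \<notin> \<int>"
    and m: "m \<in> half_lattice k" "y \<in> half_box k m"
    and m': "m' \<in> half_lattice k" "y \<in> half_box k m'"
  shows "m = m'"
proof -
  have "m$j = m'$j" for j
  proof (cases "j = k")
    case True
    obtain a a' :: int where a: "2 * m$k = of_int a" "2 * m'$k = of_int a'"
      using m(1) m'(1) by (auto simp: half_lattice_def elim!: Ints_cases)
    have "2 * y$k \<noteq> of_int a" "2 * y$k \<noteq> of_int a'" "2 * y$k \<noteq> of_int (a - 1)" "2 * y$k \<noteq> of_int (a' - 1)"
      using y by (metis Ints_of_int)+
    moreover have "of_int a - 1 \<le> 2 * y$k" "2 * y$k \<le> of_int a" "of_int a' - 1 \<le> 2 * y$k" "2 * y$k \<le> of_int a'"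
      using m(2) m'(2) a by (auto simp: half_box_def)
    ultimately have "of_int a < (of_int a' + 1 :: real)" "of_int a' < (of_int a + 1 :: real)"
      by simp_all
    then have "a = a'" by linarith
    then show ?thesis using a True by simp
  next
    case False
    have "m$j \<in> \<int>" "m'$j \<in> \<int>" using m(1) m'(1) False half_lattice_nth_Ints by blast+
    then obtain b b' :: int where b: "m$j = of_int b" "m'$j = of_int b'" by (auto elim!: Ints_cases)
    have "2 * y$j \<noteq> of_int (2 * b - 1)" "2 * y$j \<noteq> of_int (2 * b + 1)"
         "2 * y$j \<noteq> of_int (2 * b' - 1)" "2 * y$j \<noteq> of_int (2 * b' + 1)"
      using y by (metis Ints_of_int)+
    moreover have "\<bar>y$j - of_int b\<bar> \<le> 1/2" "\<bar>y$j - of_int b'\<bar> \<le> 1/2"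
      using m(2) m'(2) b False by (auto simp: half_box_def)
    ultimately have "of_int b < (of_int b' + 1 :: real)" "of_int b' < (of_int b + 1 :: real)"
      unfolding abs_le_iff by simp_all
    then have "b = b'" by linarith
    then show ?thesis using b by simp
  qed
  then show ?thesis by (simp add: vec_eq_iff)
qed

lemma exists_near_point_off_half_integers:
  fixes y :: "real^'n"
  assumes "e > 0"
  shows "\<exists>z. dist y z < e \<and> (\<forall>j. 2 * z$j \<notin> \<int>)"
proof -
  define d where "d = e / real CARD('n)"
  have d: "d > 0" using assms by (simp add: d_def)
  have "countable {t::real. 2 * t \<in> \<int>}"
  proof (rule countable_subset)
    show "{t::real. 2 * t \<in> \<int>} \<subseteq> range (\<lambda>n::int. of_int n / 2)"
      by (auto elim!: Ints_cases intro!: image_eqI[where x = "_"] simp: field_simps)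
  qed simp
  moreover have "uncountable {y$j <..< y$j + d}" for j using d by (simp add: uncountable_open_interval)
  ultimately have "\<exists>t. t \<in> {y$j <..< y$j + d} \<and> 2 * t \<notin> \<int>" for j
    by (metis countable_subset Diff_eq_empty_iff ex_in_conv DiffE mem_Collect_eq)
  then obtain zf where zf: "\<And>j. zf j \<in> {y$j <..< y$j + d} \<and> 2 * zf j \<notin> \<int>" by metis
  define z :: "real^'n" where "z = (\<chi> j. zf j)"
  have "dist y z = norm (z - y)" by (simp add: dist_norm norm_minus_commute)
  also have "\<dots> \<le> (\<Sum>j\<in>UNIV. \<bar>(z - y)$j\<bar>)" by (rule norm_le_l1_cart)
  also have "\<dots> < (\<Sum>j\<in>(UNIV::'n set). d)"
  proof (rule sum_strict_mono)
    fix j :: 'n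
    show "\<bar>(z - y)$j\<bar> < d" using zf[of j] by (auto simp: z_def abs_less_iff)
  qed auto
  also have "\<dots> = e" by (simp add: d_def)
  finally show ?thesis using zf by (auto simp: z_def)
qed

subsection \<open>A facet shared by two cubes that are not neighbours\<close>

lemma aff_dim_eq_hyperplane_patch:
  fixes S T :: "'a::euclidean_space set"
  assumes "a \<noteq> 0" and "S \<subseteq> {x. a \<bullet> x = b}"
    and "open T" and "{x. a \<bullet> x = b} \<inter> T \<noteq> {}" and "{x. a \<bullet> x = b} \<inter> T \<subseteq> S"
  shows "aff_dim S = int DIM('a) - 1"
proof -
  have "aff_dim ({x. a \<bullet> x = b} \<inter> T) = aff_dim {x. a \<bullet> x = b}"
    using aff_dim_convex_Int_open[OF convex_hyperplane assms(3,4)] .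
  then have "aff_dim {x. a \<bullet> x = b} \<le> aff_dim S" using aff_dim_subset[OF assms(5)] by simp
  moreover have "aff_dim S \<le> aff_dim {x. a \<bullet> x = b}" using aff_dim_subset[OF assms(2)] .
  ultimately show ?thesis using assms(1) by (simp add: aff_dim_hyperplane)
qed

lemma aff_dim_unit_cube_Int_diagonal_shift:
  fixes v :: "real^'n"
  assumes ik: "i \<noteq> k"
  shows "aff_dim (unit_cube v \<inter> unit_cube (v + axis i 1 - (1/2) *\<^sub>R axis k 1)) = int CARD('n) - 1"
proof -
  let ?S = "unit_cube v \<inter> unit_cube (v + axis i 1 - (1/2) *\<^sub>R axis k 1)"
  let ?H = "{x. axis i 1 \<bullet> x = v$i + 1/2}"
  text \<open>The shared facet contains a relatively open patch of the hyperplane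
    \<open>x\<^sub>i = v\<^sub>i + 1/2\<close> around \<open>p\<close>.\<close>
  define p :: "real^'n" where "p = v + (1/2) *\<^sub>R axis i 1 - (1/4) *\<^sub>R axis k 1"
  define T :: "(real^'n) set" where "T = (\<Inter>j\<in>-{i}. {x. \<bar>x$j - p$j\<bar> < 1/4})"
  have ax: "axis i 1 \<bullet> x = x$i" for x :: "real^'n" by (simp add: inner_axis')
  have open_T: "open T" unfolding T_def
    by (intro open_INT ballI open_Collect_less continuous_intros) auto
  have "p \<in> ?H" unfolding mem_Collect_eq ax using ik by (simp add: p_def axis_def)
  moreover have "p \<in> T" by (simp add: T_def)
  ultimately have patch_ne: "?H \<inter> T \<noteq> {}" by blast
  have facet_in_H: "?S \<subseteq> ?H"
  proof
    fix x assume "x \<in> ?S"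
    then have "\<bar>x$i - v$i\<bar> \<le> 1/2" "\<bar>x$i - (v + axis i 1 - (1/2) *\<^sub>R axis k 1)$i\<bar> \<le> 1/2"
      unfolding unit_cube_def by blast+
    moreover have "(v + axis i 1 - (1/2) *\<^sub>R axis k 1)$i = v$i + 1" using ik by (simp add: axis_def)
    ultimately have "x$i = v$i + 1/2" by arith
    then show "x \<in> ?H" unfolding mem_Collect_eq ax .
  qed
  have patch_in_facet: "?H \<inter> T \<subseteq> ?S"
  proof
    fix x assume x: "x \<in> ?H \<inter> T"
    then have xi: "x$i = v$i + 1/2" by (simp add: ax)
    have xj: "\<bar>x$j - p$j\<bar> < 1/4" if "j \<noteq> i" for j using x that by (auto simp: T_def)
    have "\<bar>x$j - v$j\<bar> \<le> 1/2 \<and> \<bar>x$j - (v + axis i 1 - (1/2) *\<^sub>R axis k 1)$j\<bar> \<le> 1/2" for j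
    proof -
      consider "j = i" | "j = k" | "j \<noteq> i" "j \<noteq> k" by blast
      then show ?thesis
      proof cases
        case 1
        then show ?thesis using xi ik by (simp add: axis_def)
      next
        case 2
        have "\<bar>x$k - (v$k - 1/4)\<bar> < 1/4" using xj[of k] ik by (simp add: p_def axis_def)
        moreover have "(v + axis i 1 - (1/2) *\<^sub>R axis k 1)$k = v$k - 1/2" using ik by (simp add: axis_def)
        ultimately show ?thesis unfolding 2 by arith
      next
        case 3
        then show ?thesis using xj[of j] by (auto simp: axis_def p_def abs_le_iff abs_less_iff)
      qed
    qed
    then show "x \<in> ?S" by (simp add: unit_cube_def)
  qed
  have "axis i (1::real) \<noteq> 0" by (simp add: axis_eq_0_iff)
  from aff_dim_eq_hyperplane_patch[OF this facet_in_H open_T patch_ne patch_in_facet]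
  show ?thesis by simp
qed

lemma not_cube_neighbors_diagonal_shift:
  assumes "i \<noteq> k"
  shows "\<not> cube_neighbors v (v + axis i 1 - (1/2) *\<^sub>R axis k 1)"
proof
  assume "cube_neighbors v (v + axis i 1 - (1/2) *\<^sub>R axis k 1)"
  then obtain j where j: "\<bar>v$j - (v + axis i 1 - (1/2) *\<^sub>R axis k 1)$j\<bar> = 1"
    "\<forall>r. r \<noteq> j \<longrightarrow> v$r = (v + axis i 1 - (1/2) *\<^sub>R axis k 1)$r"
    unfolding cube_neighbors_def by blast
  show False
  proof (cases "j = k")
    case True
    then show ?thesis using j(1) assms by (simp add: axis_def)
  next
    case False
    then show ?thesis using j(2) assms by (auto simp: axis_def dest: spec[of _ k])
  qed
qed

lemma (in group) cyclic_carrier_nat_pow: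
  assumes "finite (carrier G)" and "g \<in> carrier G" and "generate G {g} = carrier G"
    and "y \<in> carrier G"
  shows "\<exists>n::nat. y = g [^] n"
  using assms generate_pow_nat[OF assms(2)] ord_ge_1[OF assms(1,2)] by auto

lemma (in group) mult_generator_closed_eq_carrier:
  assumes "finite (carrier G)" and g: "g \<in> carrier G" and "generate G {g} = carrier G"
    and S: "S \<subseteq> carrier G" "S \<noteq> {}" and closed: "\<And>x. x \<in> S \<Longrightarrow> x \<otimes> g \<in> S"
  shows "S = carrier G"
proof -
  have pow_closed: "x \<otimes> g [^] n \<in> S" if "x \<in> S" for x and n :: nat
  proof (induction n)
    case 0
    then show ?case using that S by auto
  next
    case (Suc n)
    have "x \<otimes> g [^] Suc n = (x \<otimes> g [^] n) \<otimes> g"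
      using that S g by (simp add: m_assoc nat_pow_Suc subset_iff)
    then show ?case using Suc closed by simp
  qed
  obtain x where x: "x \<in> S" using S by blast
  have "y \<in> S" if "y \<in> carrier G" for y
  proof -
    have xc: "x \<in> carrier G" using x S by blast
    have "inv x \<otimes> y \<in> carrier G" using xc that by simp
    then obtain n :: nat where "inv x \<otimes> y = g [^] n"
      using cyclic_carrier_nat_pow[OF assms(1) g assms(3)] by blast
    moreover have "y = x \<otimes> (inv x \<otimes> y)" using xc that by (simp add: m_assoc[symmetric])
    ultimately show ?thesis using pow_closed[OF x] by simp
  qed
  then show ?thesis using S by blast
qed

subsection \<open>The tiling\<close>

locale cluster_tiling = half_lattice_hom G \<phi> k for G :: "('g, 'b) monoid_scheme" (structure)
  and \<phi> :: "real^'n \<Rightarrow> 'g" and k :: 'n +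
  fixes V :: "(real^'n) set" and i :: 'n
  assumes finite_V: "finite V"
    and integer_V: "\<forall>v\<in>V. integer_point v"
    and bij: "bij_betw \<phi> (V \<union> (\<lambda>v. v + (1/2) *\<^sub>R axis k 1) ` V) (carrier G)"
    and i_ne_k: "i \<noteq> k"
    and generator: "generate G {\<phi> (axis i 1)} = carrier G"
begin

definition W :: "(real^'n) set" where
  "W = V \<union> (\<lambda>v. v + (1/2) *\<^sub>R axis k 1) ` V"

definition g :: 'g where
  "g = \<phi> (axis i 1)"

lemma bij_betw_W: "bij_betw \<phi> W (carrier G)"
  using bij by (simp add: W_def)

lemma V_subset_half_lattice: "V \<subseteq> half_lattice k"
  using integer_V integer_point_in_half_lattice by blast

lemma W_subset_half_lattice: "W \<subseteq> half_lattice k"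
  using V_subset_half_lattice half_lattice_add[OF _ half_axis_in_half_lattice]
  by (auto simp: W_def)

lemma finite_carrier: "finite (carrier G)"
  using bij finite_V bij_betw_finite by blast

lemma g_closed: "g \<in> carrier G"
  unfolding g_def by (rule hom_closed[OF axis_in_half_lattice])

lemma ord_g_ge_1: "ord g \<ge> 1"
  using ord_ge_1[OF finite_carrier g_closed] .

lemma kernel_decomposition:
  assumes m: "m \<in> half_lattice k"
  shows "\<exists>w\<in>W. m - w \<in> kernel"
proof -
  obtain w where w: "w \<in> W" "\<phi> w = \<phi> m"
    using bij_betw_W hom_closed[OF m] by (metis bij_betw_iff_bijections)
  have wM: "w \<in> half_lattice k" using w W_subset_half_lattice by blast
  have "\<phi> (m - w) = \<one>" using hom_diff[OF m wM] w hom_closed[OF m] by simp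
  then show ?thesis using w half_lattice_diff[OF m wM] by (auto simp: kernel_def)
qed

lemma kernel_decomposition_unique:
  assumes "w \<in> W" "w' \<in> W" "l \<in> kernel" "l' \<in> kernel" "w + l = w' + l'"
  shows "l = l'"
proof -
  have wM: "w \<in> half_lattice k" "w' \<in> half_lattice k" using assms W_subset_half_lattice by blast+
  have "\<phi> (w + l) = \<phi> w" "\<phi> (w' + l') = \<phi> w'"
    using hom_add_kernel wM assms(3,4) by simp_all
  then have "\<phi> w = \<phi> w'" using assms(5) by simp
  then have "w = w'" using bij_betw_W assms(1,2) by (metis bij_betw_iff_bijections)
  then show ?thesis using assms by simp
qed

lemma translate_cluster: "(\<lambda>x. x + l) ` cluster V = (\<Union>w\<in>W. half_box k (w + l))"
  unfolding cluster_eq_half_boxes[of V k] image_UN translate_half_box W_def ..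

lemma translates_cover: "(\<Union>l\<in>kernel. (\<lambda>x. x + l) ` cluster V) = UNIV"
proof -
  have "y \<in> (\<Union>l\<in>kernel. (\<lambda>x. x + l) ` cluster V)" for y
  proof -
    obtain m where m: "m \<in> half_lattice k" "y \<in> half_box k m" using half_boxes_cover by blast
    obtain w where w: "w \<in> W" "m - w \<in> kernel" using kernel_decomposition[OF m(1)] by blast
    have "y \<in> half_box k (w + (m - w))" using m(2) by simp
    then show ?thesis using w unfolding translate_cluster by blast
  qed
  then show ?thesis by blast
qed

lemma translates_interiors_disjoint:
  assumes l: "l \<in> kernel" "l' \<in> kernel" "l \<noteq> l'"
  shows "interior ((\<lambda>x. x + l) ` cluster V) \<inter> interior ((\<lambda>x. x + l') ` cluster V) = {}"
proof (rule ccontr)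
  assume "\<not> ?thesis"
  then obtain y where y: "y \<in> interior ((\<lambda>x. x + l) ` cluster V)" "y \<in> interior ((\<lambda>x. x + l') ` cluster V)"
    by blast
  obtain e1 where e1: "e1 > 0" "ball y e1 \<subseteq> (\<lambda>x. x + l) ` cluster V" using y(1) mem_interior by blast
  obtain e2 where e2: "e2 > 0" "ball y e2 \<subseteq> (\<lambda>x. x + l') ` cluster V" using y(2) mem_interior by blast
  obtain z where z: "dist y z < min e1 e2" "\<forall>j. 2 * z$j \<notin> \<int>"
    using exists_near_point_off_half_integers[of "min e1 e2" y] e1 e2 by auto
  have "z \<in> (\<lambda>x. x + l) ` cluster V" "z \<in> (\<lambda>x. x + l') ` cluster V"
    using z e1 e2 by auto
  then obtain w w' where w: "w \<in> W" "z \<in> half_box k (w + l)" and w': "w' \<in> W" "z \<in> half_box k (w' + l')"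
    by (auto simp: translate_cluster)
  have "w + l \<in> half_lattice k" "w' + l' \<in> half_lattice k"
    using w w' l W_subset_half_lattice half_lattice_add by (auto simp: kernel_def)
  then have "w + l = w' + l'" using half_box_unique z(2) w(2) w'(2) by blast
  then show False using kernel_decomposition_unique[OF w(1) w'(1) l(1,2)] l(3) by blast
qed

subsection \<open>A basis of the kernel\<close>

text \<open>Modulo the kernel, \<open>e\<^sub>i\<close> has order \<open>ord g\<close> and every other generator of M is congruent to
  a multiple of \<open>e\<^sub>i\<close>; subtracting these multiples gives a basis.\<close>

definition generator_length :: "'n \<Rightarrow> real" where
  "generator_length j = (if j = k then 1/2 else 1)"

definition exponent :: "'n \<Rightarrow> nat" where
  "exponent j = (SOME n. \<phi> (generator_length j *\<^sub>R axis j 1) = g [^] n)"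

definition basis :: "'n \<Rightarrow> real^'n" where
  "basis j = (if j = i then real (ord g) *\<^sub>R axis i 1
              else generator_length j *\<^sub>R axis j 1 - real (exponent j) *\<^sub>R axis i 1)"

lemma scaled_axis_in_half_lattice: "generator_length j *\<^sub>R axis j 1 \<in> half_lattice k"
  by (auto simp: generator_length_def axis_in_half_lattice half_axis_in_half_lattice)

lemma hom_scaled_axis: "\<phi> (generator_length j *\<^sub>R axis j 1) = g [^] exponent j"
proof -
  have "\<exists>n::nat. \<phi> (generator_length j *\<^sub>R axis j 1) = g [^] n"
    using cyclic_carrier_nat_pow[OF finite_carrier g_closed generator[folded g_def]]
      hom_closed[OF scaled_axis_in_half_lattice] by blast
  then show ?thesis unfolding exponent_def by (rule someI_ex)
qed

lemma basis_in_kernel: "basis j \<in> kernel"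
proof (cases "j = i")
  case True
  then show ?thesis
    using hom_scaleR_nat[OF axis_in_half_lattice] half_lattice_scaleR_int[OF axis_in_half_lattice, of "int (ord g)"]
    by (simp add: kernel_def basis_def g_def[symmetric] pow_ord_eq_1[OF g_closed])
next
  case False
  have m: "real (exponent j) *\<^sub>R axis i 1 \<in> half_lattice k"
    using half_lattice_scaleR_int[OF axis_in_half_lattice, of "int (exponent j)"] by simp
  have "\<phi> (basis j) = g [^] exponent j \<otimes> inv (g [^] exponent j)"
    using False hom_diff[OF scaled_axis_in_half_lattice m] hom_scaleR_nat[OF axis_in_half_lattice]
      hom_scaled_axis by (simp add: basis_def g_def)
  also have "\<dots> = \<one>" using g_closed by simp
  finally show ?thesis using False half_lattice_diff[OF scaled_axis_in_half_lattice m]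
    by (simp add: kernel_def basis_def)
qed

lemma basis_combination_nth:
  "(\<Sum>j\<in>UNIV. z$j *\<^sub>R basis j) $ r =
     (if r = i then z$i * real (ord g) - (\<Sum>j\<in>UNIV-{i}. z$j * real (exponent j)) else z$r * generator_length r)"
proof -
  have e: "(\<Sum>j\<in>UNIV. z$j *\<^sub>R basis j) $ r = z$i * (basis i $ r) + (\<Sum>j\<in>UNIV-{i}. z$j * (basis j $ r))"
    by (simp add: sum.remove)
  show ?thesis
  proof (cases "r = i")
    case True
    have "(\<Sum>j\<in>UNIV-{i}. z$j * (basis j $ r)) = (\<Sum>j\<in>UNIV-{i}. - (z$j * real (exponent j)))"
      using True by (intro sum.cong) (auto simp: basis_def axis_def)
    then show ?thesis using e True by (simp add: basis_def sum_negf)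
  next
    case False
    have "(\<Sum>j\<in>UNIV-{i}. z$j * (basis j $ r)) = (\<Sum>j\<in>UNIV-{i}. if j = r then z$r * generator_length r else 0)"
      using False by (intro sum.cong) (auto simp: basis_def axis_def)
    also have "\<dots> = z$r * generator_length r" using False by (simp add: sum.delta')
    finally show ?thesis using e False by (simp add: basis_def axis_def)
  qed
qed

definition basis_matrix :: "real^'n^'n" where
  "basis_matrix = (\<chi> r j. basis j $ r)"

lemma basis_matrix_mult: "basis_matrix *v z = (\<Sum>j\<in>UNIV. z$j *\<^sub>R basis j)"
  by (simp add: basis_matrix_def matrix_vector_mult_def vec_eq_iff mult.commute)

lemma invertible_basis_matrix: "invertible basis_matrix"
  unfolding invertible_left_inverse matrix_left_invertible_ker
proof (intro allI impI)
  fix z assume "basis_matrix *v z = 0"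
  then have Bz: "(\<Sum>j\<in>UNIV. z$j *\<^sub>R basis j) $ r = 0" for r by (simp add: basis_matrix_mult)
  have z0: "z$r = 0" if "r \<noteq> i" for r
    using Bz[of r, unfolded basis_combination_nth] that by (simp add: generator_length_def split: if_splits)
  then have "z$i = 0" using Bz[of i, unfolded basis_combination_nth] ord_g_ge_1 by simp
  with z0 show "z = 0" by (metis vec_eq_iff zero_index)
qed

lemma kernel_subset_integer_combinations:
  assumes xK: "x \<in> kernel"
  shows "\<exists>z. (\<forall>j. z$j \<in> \<int>) \<and> x = (\<Sum>j\<in>UNIV. z$j *\<^sub>R basis j)"
proof -
  have xM: "x \<in> half_lattice k" using xK by (simp add: kernel_def)
  define t where "t = x$i + (\<Sum>j\<in>UNIV-{i}. x$j / generator_length j * real (exponent j))"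
  define z :: "real^'n" where "z = (\<chi> j. if j = i then t / real (ord g) else x$j / generator_length j)"
  have "(\<Sum>j\<in>UNIV. z$j *\<^sub>R basis j) $ r = x $ r" for r
    unfolding basis_combination_nth using ord_g_ge_1 by (simp add: z_def t_def generator_length_def)
  then have x: "x = (\<Sum>j\<in>UNIV. z$j *\<^sub>R basis j)" by (simp add: vec_eq_iff)
  have zint: "z$j \<in> \<int>" if "j \<noteq> i" for j
    using xM that by (auto simp: z_def generator_length_def half_lattice_def mult.commute)
  have "x - (\<Sum>j\<in>UNIV-{i}. z$j *\<^sub>R basis j) \<in> kernel"
    using kernel_diff[OF xK] kernel_sum_Ints[of "UNIV-{i}" basis "\<lambda>j. z$j"] basis_in_kernel zint by simp
  moreover have "x - (\<Sum>j\<in>UNIV-{i}. z$j *\<^sub>R basis j) = z$i *\<^sub>R basis i"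
    using x sum.remove[of UNIV i "\<lambda>j. z$j *\<^sub>R basis j"] by simp
  moreover have "z$i *\<^sub>R basis i = t *\<^sub>R axis i 1"
    using ord_g_ge_1 by (simp add: z_def basis_def)
  ultimately have yK: "t *\<^sub>R axis i 1 \<in> kernel" by simp
  then have "t *\<^sub>R axis i 1 \<in> half_lattice k" by (simp add: kernel_def)
  from half_lattice_nth_Ints[OF this i_ne_k] have "t \<in> \<int>" by simp
  then obtain t' where t': "t = of_int t'" by (rule Ints_cases)
  then have "g [^] t' = \<one>"
    using yK hom_scaleR_int[OF axis_in_half_lattice] by (simp add: kernel_def g_def)
  then have "int (ord g) dvd t'" using int_pow_eq_id[OF g_closed] by simp
  then obtain q where "t' = int (ord g) * q" by (rule dvdE)
  then have "z$i = of_int q" using t' ord_g_ge_1 by (simp add: z_def)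
  then have "z$j \<in> \<int>" for j using zint by (cases "j = i") auto
  with x show ?thesis by blast
qed

lemma kernel_is_lattice: "is_lattice kernel"
  unfolding is_lattice_def
proof (intro exI conjI)
  show "invertible basis_matrix" by (rule invertible_basis_matrix)
  show "kernel = range (\<lambda>z::int^'n. basis_matrix *v (\<chi> j. of_int (z$j)))"
  proof
    show "range (\<lambda>z::int^'n. basis_matrix *v (\<chi> j. of_int (z$j))) \<subseteq> kernel"
    proof clarify
      fix z :: "int^'n"
      show "basis_matrix *v (\<chi> j. of_int (z$j)) \<in> kernel"
        unfolding basis_matrix_mult
        using kernel_sum_Ints[of UNIV basis "\<lambda>j. (\<chi> j. of_int (z$j)) $ j"] basis_in_kernel by simp
    qed
  next
    show "kernel \<subseteq> range (\<lambda>z::int^'n. basis_matrix *v (\<chi> j. of_int (z$j)))"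
    proof
      fix x assume "x \<in> kernel"
      then obtain z where z: "\<forall>j. z$j \<in> \<int>" "x = (\<Sum>j\<in>UNIV. z$j *\<^sub>R basis j)"
        using kernel_subset_integer_combinations by blast
      define zz :: "int^'n" where "zz = (\<chi> j. \<lfloor>z$j\<rfloor>)"
      have "(\<chi> j. of_int (zz$j)) = z" using z(1) by (simp add: zz_def vec_eq_iff)
      then have "x = basis_matrix *v (\<chi> j. of_int (zz$j))" by (simp add: basis_matrix_mult z(2))
      then show "x \<in> range (\<lambda>z::int^'n. basis_matrix *v (\<chi> j. of_int (z$j)))" by blast
    qed
  qed
qed

lemma lattice_tiling_kernel: "lattice_tiling (cluster V) kernel"
  by (simp add: lattice_tiling_def kernel_is_lattice translates_interiors_disjoint translates_cover)

subsection \<open>Non-regularity\<close>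

lemma V_nonempty: "V \<noteq> {}"
proof
  assume "V = {}"
  then have "W = {}" unfolding W_def by simp
  then have "carrier G = {}" using bij_betw_imp_surj_on[OF bij_betw_W] by simp
  then show False by blast
qed

lemma image_V_ne_carrier: "\<phi> ` V \<noteq> carrier G"
proof
  assume eq: "\<phi> ` V = carrier G"
  obtain v where v: "v \<in> V" using V_nonempty by blast
  have vh: "v + (1/2) *\<^sub>R axis k 1 \<in> W" using v by (simp add: W_def)
  then have "\<phi> (v + (1/2) *\<^sub>R axis k 1) \<in> \<phi> ` V" using eq W_subset_half_lattice hom_closed by blast
  then obtain v' where v': "v' \<in> V" "\<phi> (v + (1/2) *\<^sub>R axis k 1) = \<phi> v'" by blast
  have "v' \<in> W" using v'(1) by (simp add: W_def)
  then have "v + (1/2) *\<^sub>R axis k 1 = v'"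
    using inj_onD[OF bij_betw_imp_inj_on[OF bij_betw_W] v'(2) vh] by blast
  then have "v'$k = v$k + 1/2" by auto
  moreover have "v$k \<in> \<int>" "v'$k \<in> \<int>" using integer_V v v' by (auto simp: integer_point_def)
  ultimately show False using half_plus_Ints_not_Ints by metis
qed

lemma exists_shift_outside_image: "\<exists>v\<in>V. \<phi> (v + axis i 1) \<notin> \<phi> ` V"
proof (rule ccontr)
  assume "\<not> ?thesis"
  then have closed: "x \<otimes> g \<in> \<phi> ` V" if "x \<in> \<phi> ` V" for x
    using that V_subset_half_lattice hom_add[OF _ axis_in_half_lattice] by (force simp: g_def)
  have "\<phi> ` V = carrier G"
    using mult_generator_closed_eq_carrier[OF finite_carrier g_closed generator[folded g_def] _ _ closed]
      V_nonempty V_subset_half_lattice hom_closed by blast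
  then show False using image_V_ne_carrier by blast
qed

lemma non_regular_tiling_kernel: "non_regular_tiling V kernel"
proof -
  let ?h = "(1/2) *\<^sub>R axis k 1"
  obtain v where v: "v \<in> V" "\<phi> (v + axis i 1) \<notin> \<phi> ` V" using exists_shift_outside_image by blast
  have vM: "v + axis i 1 \<in> half_lattice k"
    using V_subset_half_lattice v(1) half_lattice_add axis_in_half_lattice by blast
  obtain w where w: "w \<in> W" "v + axis i 1 - w \<in> kernel" using kernel_decomposition[OF vM] by blast
  have "w \<notin> V"
  proof
    assume "w \<in> V"
    have "\<phi> (v + axis i 1) = \<phi> (w + (v + axis i 1 - w))" by simp
    also have "\<dots> = \<phi> w"
      using hom_add_kernel w(2) \<open>w \<in> V\<close> V_subset_half_lattice by blast
    finally show False using v(2) \<open>w \<in> V\<close> by blast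
  qed
  then obtain v' where v': "v' \<in> V" "w = v' + ?h" using w(1) by (auto simp: W_def)
  define \<kappa> where "\<kappa> = v + axis i 1 - w"
  have shift: "v' + \<kappa> = v + axis i 1 - ?h" by (simp add: \<kappa>_def v')
  have "\<kappa> \<noteq> 0"
  proof
    assume "\<kappa> = 0"
    then have "v$k = v'$k + 1/2" using shift i_ne_k by (auto simp: vec_eq_iff axis_def dest: spec[of _ k])
    moreover have "v$k \<in> \<int>" "v'$k \<in> \<int>" using integer_V v(1) v'(1) by (auto simp: integer_point_def)
    ultimately show False using half_plus_Ints_not_Ints by metis
  qed
  moreover have "aff_dim (unit_cube (v + 0) \<inter> unit_cube (v' + \<kappa>)) = int CARD('n) - 1"
    unfolding shift using aff_dim_unit_cube_Int_diagonal_shift[OF i_ne_k] by simp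
  moreover have "\<not> cube_neighbors (v + 0) (v' + \<kappa>)"
    unfolding shift using not_cube_neighbors_diagonal_shift[OF i_ne_k] by simp
  moreover have "\<kappa> \<in> kernel" using w(2) by (simp add: \<kappa>_def)
  ultimately have "\<kappa> \<in> kernel \<and> 0 \<noteq> \<kappa> \<and> aff_dim (unit_cube (v + 0) \<inter> unit_cube (v' + \<kappa>)) = int CARD('n) - 1
      \<and> \<not> cube_neighbors (v + 0) (v' + \<kappa>)"
    by simp
  then show ?thesis unfolding non_regular_tiling_def
    using zero_in_kernel v(1) v'(1) by blast
qed

end

theorem theorem4:
  fixes V :: "(real^'n) set" and k :: 'n
    and G :: "('g, 'b) monoid_scheme" and \<phi> :: "real^'n \<Rightarrow> 'g"
  assumes "finite V"
    and "\<forall>v\<in>V. integer_point v"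
    and "comm_group G"
    and "order G = 2 * card V"
    and "\<phi> \<in> hom (half_lattice_group k) G"
    and "bij_betw \<phi> (V \<union> (\<lambda>v. v + (1/2) *\<^sub>R axis k 1) ` V) (carrier G)"
    and "\<exists>i. i \<noteq> k \<and> generate G {\<phi> (axis i 1)} = carrier G"
  shows "\<exists>L. lattice_tiling (cluster V) L \<and> non_regular_tiling V L"
proof -
  obtain i where "i \<noteq> k" "generate G {\<phi> (axis i 1)} = carrier G" using assms(7) by blast
  then interpret cluster_tiling G \<phi> k V i
    using assms(1-3,5,6)
    by (simp add: cluster_tiling_def cluster_tiling_axioms_def half_lattice_hom_def
        half_lattice_hom_axioms_def)
  show ?thesis using lattice_tiling_kernel non_regular_tiling_kernel by blast
qed

end
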